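(* Suppose observations $(x_i,y_i)$, $i=1,\dots,n$, are generated from $y_i=f(x_i)+\varepsilon_i$ with $\varepsilon_i$ i.i.d. $N(0,\sigma^2)$. Let $\mathbf{B}$ be the $n\times J$ matrix with $\mathbf{B}_{ij}=B_j(x_i)$ (cubic B-spline basis), assumed of full column rank, $\mathbf{f}=(f(x_1),\dots,f(x_n))^T$ and $\mathbf{y}=(y_1,\dots,y_n)^T$. Let $\hat\gamma^{ls}=(\mathbf{B}^T\mathbf{B})^{-1}\mathbf{B}^T\mathbf{y}$ be the unconstrained cubic spline coefficients and $\hat\gamma$ the monotone cubic spline coefficients, i.e. a minimizer of $\|\mathbf{y}-\mathbf{B}\gamma\|_2^2$ subject to $\gamma_1\le\cdots\le\gamma_J$. Let $\mathbf{G}$ be the $g\times J$ ($g<J$) tie matrix of $\hat\gamma$: partition $\{1,\dots,J\}$ into the maximal blocks $I_1,\dots,I_g$ of consecutive indices on which $\hat\gamma$ is constant and set $\mathbf{G}_{rj}=1$ if $j\in I_r$, $0$ otherwise, so that $\mathbf{B}\hat\gamma=\mathbf{H}_g\mathbf{y}$ with $\mathbf{H}_g=\mathbf{B}\mathbf{G}^T(\mathbf{G}\mathbf{B}^T\mathbf{B}\mathbf{G}^T)^{-1}\mathbf{G}\mathbf{B}^T$; treat $\mathbf{G}$ as fixed (non-random). Let $\mathbf{H}=\mathbf{B}(\mathbf{B}^T\mathbf{B})^{-1}\mathbf{B}^T$, $\mathrm{MSE}(\hat{\mathbf{y}})=\mathbb{E}\|\mathbf{H}_g\mathbf{y}-\mathbf{f}\|_2^2$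 and $\mathrm{MSE}(\hat{\mathbf{y}}^{ls})=\mathbb{E}\|\mathbf{B}\hat\gamma^{ls}-\mathbf{f}\|_2^2$. Then $\mathbf{H}-\mathbf{H}_g$ is positive semidefinite, and if $$\sigma^2\ge\frac{\mathbf{f}^T(\mathbf{H}-\mathbf{H}_g)\mathbf{f}}{J-g},$$ then $\mathrm{MSE}(\hat{\mathbf{y}})\le\mathrm{MSE}(\hat{\mathbf{y}}^{ls})$.
   Context: $B_1,\dots,B_J$ are cubic B-spline basis functions on knots $\xi_0<\cdots<\xi_{K+1}$, $J=K+4$ (defined recursively from an augmented knot sequence in the standard Cox–de Boor way). *)

theory Defs imports "HOL-Probability.Probability" begin

text \<open>A matrix is a function nat => nat => real, a vector nat => real; dimensions are
explicit arguments. mmul k A B is the product of an (m x k) and a (k x p) matrix.\<close>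

definition mmul :: "nat \<Rightarrow> (nat \<Rightarrow> nat \<Rightarrow> real) \<Rightarrow> (nat \<Rightarrow> nat \<Rightarrow> real) \<Rightarrow> nat \<Rightarrow> nat \<Rightarrow> real" where
  "mmul k A B = (\<lambda>i j. \<Sum>l<k. A i l * B l j)"

definition mtr :: "(nat \<Rightarrow> nat \<Rightarrow> real) \<Rightarrow> nat \<Rightarrow> nat \<Rightarrow> real" where
  "mtr A = (\<lambda>i j. A j i)"

definition mvec :: "nat \<Rightarrow> (nat \<Rightarrow> nat \<Rightarrow> real) \<Rightarrow> (nat \<Rightarrow> real) \<Rightarrow> nat \<Rightarrow> real" where
  "mvec k A v = (\<lambda>i. \<Sum>j<k. A i j * v j)"

text \<open>Inverse of an m x m matrix (meaningful when it is invertible).\<close>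
definition minv :: "nat \<Rightarrow> (nat \<Rightarrow> nat \<Rightarrow> real) \<Rightarrow> nat \<Rightarrow> nat \<Rightarrow> real" where
  "minv m A = (SOME Ai. (\<forall>i<m. \<forall>j<m. mmul m A Ai i j = (if i = j then 1 else 0)) \<and>
                        (\<forall>i<m. \<forall>j<m. mmul m Ai A i j = (if i = j then 1 else 0)))"

definition full_col_rank :: "nat \<Rightarrow> nat \<Rightarrow> (nat \<Rightarrow> nat \<Rightarrow> real) \<Rightarrow> bool" where
  "full_col_rank n k A \<longleftrightarrow> (\<forall>c. (\<forall>i<n. (\<Sum>j<k. A i j * c j) = 0) \<longrightarrow> (\<forall>j<k. c j = 0))"

definition qform :: "nat \<Rightarrow> (nat \<Rightarrow> nat \<Rightarrow> real) \<Rightarrow> (nat \<Rightarrow> real) \<Rightarrow> real" where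
  "qform m A v = (\<Sum>i<m. \<Sum>j<m. v i * A i j * v j)"

definition psd :: "nat \<Rightarrow> (nat \<Rightarrow> nat \<Rightarrow> real) \<Rightarrow> bool" where
  "psd m A \<longleftrightarrow> (\<forall>v. qform m A v \<ge> 0)"

text \<open>bspl t b j k x = B-spline of order k (degree k-1) on knots t j, ..., t (j+k).
Order 1: indicator of [t j, t (j+1)), where the last nondegenerate interval ending at the
right boundary b is taken closed.  Divisions 0/0 are 0 (Isabelle convention = usual convention).\<close>
fun bspl :: "(nat \<Rightarrow> real) \<Rightarrow> real \<Rightarrow> nat \<Rightarrow> nat \<Rightarrow> real \<Rightarrow> real" where
  "bspl t b j 0 x = 0"
| "bspl t b j (Suc 0) x =
     (if (t j \<le> x \<and> x < t (Suc j)) \<or> (t j < t (Suc j) \<and> t (Suc j) = b \<and> x = b) then 1 else 0)"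
| "bspl t b j (Suc (Suc m)) x =
     (x - t j) / (t (j + m + 1) - t j) * bspl t b j (Suc m) x
   + (t (j + m + 2) - x) / (t (j + m + 2) - t (Suc j)) * bspl t b (Suc j) (Suc m) x"

text \<open>Augmented knot sequence for interior/boundary knots xi 0 < ... < xi (K+1):
xi 0 four times, xi 1 .. xi K, xi (K+1) four times (indices 0 .. K+7).\<close>
definition aug_knots :: "(nat \<Rightarrow> real) \<Rightarrow> nat \<Rightarrow> nat \<Rightarrow> real" where
  "aug_knots xi K i = (if i \<le> 3 then xi 0 else if i \<le> K + 4 then xi (i - 3) else xi (K + 1))"

text \<open>cubic_bspline xi K j, for j < K+4, is the basis function B_(j+1) of the paper.\<close>
definition cubic_bspline :: "(nat \<Rightarrow> real) \<Rightarrow> nat \<Rightarrow> nat \<Rightarrow> real \<Rightarrow> real" where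
  "cubic_bspline xi K j x = bspl (aug_knots xi K) (xi (K + 1)) j 4 x"

text \<open>Indices 0..J-1.  A new block starts at k>0 iff gam (k-1) \<noteq> gam k; blk gam j is the
(0-based) index of the maximal block of consecutive equal values containing j.\<close>
definition blk :: "(nat \<Rightarrow> real) \<Rightarrow> nat \<Rightarrow> nat" where
  "blk gam j = card {k. 0 < k \<and> k \<le> j \<and> gam (k - 1) \<noteq> gam k}"

definition nblocks :: "nat \<Rightarrow> (nat \<Rightarrow> real) \<Rightarrow> nat" where
  "nblocks J gam = Suc (card {k. 0 < k \<and> k < J \<and> gam (k - 1) \<noteq> gam k})"

definition tie_mat :: "(nat \<Rightarrow> real) \<Rightarrow> nat \<Rightarrow> nat \<Rightarrow> real" where
  "tie_mat gam r j = (if r = blk gam j then 1 else 0)"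

end

theory Submission
  imports Defs "Jordan_Normal_Form.Determinant"
begin

text \<open>
Both fits are orthogonal projections of \<open>y\<close>: \<open>H\<close> onto the column space of \<open>B\<close>, and \<open>H\<^sub>g\<close>
onto that of \<open>B G\<^sup>T\<close>, which lies inside it. Hence \<open>H - H\<^sub>g\<close> is again an orthogonal
projection and in particular positive semidefinite. For an orthogonal projection \<open>R\<close> and noise with
covariance \<open>\<sigma>\<^sup>2 I\<close>, the risk is bias plus variance,
\<open>E |R (f + \<epsilon>) - f|\<^sup>2 = |f|\<^sup>2 - f\<^sup>T R f + \<sigma>\<^sup>2 tr R\<close>, and \<open>tr R\<close> is the rank of \<open>R\<close>
(\<open>J\<close> for \<open>H\<close>, \<open>g\<close> for \<open>H\<^sub>g\<close>). So the two risks differ by \<open>f\<^sup>T (H - H\<^sub>g) f - \<sigma>\<^sup>2 (J - g)\<close>.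
\<close>

section \<open>Matrix algebra\<close>

definition is_identity :: "nat \<Rightarrow> (nat \<Rightarrow> nat \<Rightarrow> real) \<Rightarrow> bool" where
  "is_identity k E \<longleftrightarrow> (\<forall>i<k. \<forall>j<k. E i j = (if i = j then 1 else 0))"

lemma mmul_assoc: "mmul k (mmul l A B) C = mmul l A (mmul k B C)"
  unfolding mmul_def
  by (auto intro!: ext simp: sum_distrib_left sum_distrib_right mult_ac intro: sum.swap)

lemma mtr_mmul: "mtr (mmul k A B) = mmul k (mtr B) (mtr A)"
  by (auto intro!: ext simp: mtr_def mmul_def mult_ac)

lemma mtr_mtr [simp]: "mtr (mtr A) = A"
  by (simp add: mtr_def)

lemma mvec_mmul: "mvec k (mmul l A B) v = mvec l A (mvec k B v)"
  unfolding mmul_def mvec_def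
  by (auto intro!: ext simp: sum_distrib_left sum_distrib_right mult_ac intro: sum.swap)

lemma mmul_cong:
  assumes "\<forall>l<k. X i l = X' i l" and "\<forall>l<k. Y l j = Y' l j"
  shows "mmul k X Y i j = mmul k X' Y' i j"
  unfolding mmul_def using assms by (intro sum.cong) auto

lemma mmul_identity_right:
  assumes "is_identity k E" and "j < k"
  shows "mmul k X E i j = X i j"
proof -
  have "mmul k X E i j = (\<Sum>l<k. if l = j then X i l else 0)"
    unfolding mmul_def using assms by (intro sum.cong) (auto simp: is_identity_def)
  then show ?thesis using assms(2) by (simp add: sum.delta')
qed

lemma mmul_identity_left:
  assumes "is_identity k E" and "i < k"
  shows "mmul k E X i j = X i j"
proof -
  have "mmul k E X i j = (\<Sum>l<k. if i = l then X l j else 0)"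
    unfolding mmul_def using assms by (intro sum.cong) (auto simp: is_identity_def)
  then show ?thesis using assms(2) by (simp add: sum.delta)
qed

lemma full_col_rank_mvec_iff:
  "full_col_rank n k A \<longleftrightarrow> (\<forall>c. (\<forall>i<n. mvec k A c i = 0) \<longrightarrow> (\<forall>j<k. c j = 0))"
  by (simp add: full_col_rank_def mvec_def)

lemma full_col_rank_mmul:
  assumes "full_col_rank n k A" and "full_col_rank k g C"
  shows "full_col_rank n g (mmul k A C)"
  unfolding full_col_rank_mvec_iff mvec_mmul
proof (rule allI, rule impI)
  fix c assume "\<forall>i<n. mvec k A (mvec g C c) i = 0"
  then have "\<forall>j<k. mvec g C c j = 0"
    using assms(1) by (simp add: full_col_rank_mvec_iff)
  then show "\<forall>r<g. c r = 0"
    using assms(2) by (simp add: full_col_rank_mvec_iff)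
qed

lemma sum_sq_mvec_eq_qform_gram:
  "(\<Sum>i<n. (mvec k A c i)\<^sup>2) = qform k (mmul n (mtr A) A) c"
proof -
  have "(\<Sum>i<n. (mvec k A c i)\<^sup>2) = (\<Sum>i<n. \<Sum>j<k. \<Sum>l<k. c j * (A i j * A i l) * c l)"
    by (simp add: mvec_def power2_eq_square sum_product mult_ac)
  also have "\<dots> = (\<Sum>j<k. \<Sum>l<k. \<Sum>i<n. c j * (A i j * A i l) * c l)"
    by (subst sum.swap) (intro sum.cong refl sum.swap)
  also have "\<dots> = qform k (mmul n (mtr A) A) c"
    by (simp add: qform_def mmul_def mtr_def sum_distrib_left sum_distrib_right mult_ac)
  finally show ?thesis .
qed

lemma full_col_rank_gram:
  assumes "full_col_rank n k A"
  shows "full_col_rank k k (mmul n (mtr A) A)"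
  unfolding full_col_rank_mvec_iff
proof (rule allI, rule impI)
  fix c assume "\<forall>i<k. mvec k (mmul n (mtr A) A) c i = 0"
  then have "qform k (mmul n (mtr A) A) c = 0"
    by (simp add: qform_def mvec_def sum_distrib_left[symmetric] mult.assoc)
  then have "(\<Sum>i<n. (mvec k A c i)\<^sup>2) = 0"
    by (simp add: sum_sq_mvec_eq_qform_gram)
  then have "\<forall>i<n. mvec k A c i = 0"
    by (simp add: sum_nonneg_eq_0_iff)
  then show "\<forall>j<k. c j = 0"
    using assms by (simp add: full_col_rank_mvec_iff)
qed

lemma full_col_rank_square_invertible:
  assumes inj: "full_col_rank k k S"
  shows "\<exists>Si. is_identity k (mmul k S Si) \<and> is_identity k (mmul k Si S)"
proof -
  define A where "A = mat k k (\<lambda>(i, j). S i j)"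
  have A: "A \<in> carrier_mat k k" by (simp add: A_def)
  have "det A \<noteq> 0"
  proof
    assume "det A = 0"
    then obtain v where v: "v \<in> carrier_vec k" "v \<noteq> 0\<^sub>v k" "A *\<^sub>v v = 0\<^sub>v k"
      using det_0_iff_vec_prod_zero_field[OF A] by auto
    define c where "c j = (if j < k then v $ j else 0)" for j
    have "\<forall>i<k. (\<Sum>j<k. S i j * c j) = 0"
    proof (intro allI impI)
      fix i assume i: "i < k"
      have "(A *\<^sub>v v) $ i = 0" using v i by simp
      then show "(\<Sum>j<k. S i j * c j) = 0"
        using i v(1) by (simp add: A_def scalar_prod_def c_def lessThan_atLeast0 row_def)
    qed
    with inj have "\<forall>j<k. c j = 0" unfolding full_col_rank_def by blast
    then have "v = 0\<^sub>v k" using v(1) by (intro eq_vecI) (auto simp: c_def)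
    with v show False by simp
  qed
  then have "A \<in> Units (ring_mat TYPE(real) k ())" by (rule det_non_zero_imp_unit[OF A])
  then obtain B where B: "B \<in> carrier_mat k k" "A * B = 1\<^sub>m k" "B * A = 1\<^sub>m k"
    by (auto simp: Units_def ring_mat_def)
  show ?thesis
  proof (intro exI[of _ "\<lambda>i j. B $$ (i, j)"] conjI)
    have "(A * B) $$ (i, j) = (if i = j then 1 else 0)" if "i < k" "j < k" for i j
      using B that by simp
    then show "is_identity k (mmul k S (\<lambda>i j. B $$ (i, j)))"
      using B unfolding is_identity_def
      by (simp add: A_def mmul_def scalar_prod_def lessThan_atLeast0 row_def col_def)
    have "(B * A) $$ (i, j) = (if i = j then 1 else 0)" if "i < k" "j < k" for i j
      using B that by simp
    then show "is_identity k (mmul k (\<lambda>i j. B $$ (i, j)) S)"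
      using B unfolding is_identity_def
      by (simp add: A_def mmul_def scalar_prod_def lessThan_atLeast0 row_def col_def)
  qed
qed

lemma minv_inverse:
  assumes "full_col_rank k k S"
  shows "is_identity k (mmul k S (minv k S))" and "is_identity k (mmul k (minv k S) S)"
  using someI_ex[OF full_col_rank_square_invertible[OF assms]]
  unfolding minv_def is_identity_def by blast+

section \<open>Hat matrices and orthogonal projections\<close>

definition pinv :: "nat \<Rightarrow> nat \<Rightarrow> (nat \<Rightarrow> nat \<Rightarrow> real) \<Rightarrow> nat \<Rightarrow> nat \<Rightarrow> real" where
  "pinv n k A = mmul k (minv k (mmul n (mtr A) A)) (mtr A)"

definition hat_mat :: "nat \<Rightarrow> nat \<Rightarrow> (nat \<Rightarrow> nat \<Rightarrow> real) \<Rightarrow> nat \<Rightarrow> nat \<Rightarrow> real" where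
  "hat_mat n k A = mmul k A (pinv n k A)"

definition orth_proj :: "nat \<Rightarrow> (nat \<Rightarrow> nat \<Rightarrow> real) \<Rightarrow> bool" where
  "orth_proj n R \<longleftrightarrow> mtr R = R \<and> mmul n R R = R"

context
  fixes n k :: nat and A :: "nat \<Rightarrow> nat \<Rightarrow> real"
  assumes full_rank: "full_col_rank n k A"
begin

lemma pinv_left_inverse: "is_identity k (mmul n (pinv n k A) A)"
  using minv_inverse(2)[OF full_col_rank_gram[OF full_rank]]
  by (simp add: pinv_def mmul_assoc)

lemma minv_gram_sym:
  assumes "i < k" and "j < k"
  shows "minv k (mmul n (mtr A) A) j i = minv k (mmul n (mtr A) A) i j"
proof -
  let ?S = "mmul n (mtr A) A" and ?M = "minv k (mmul n (mtr A) A)"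
  have S_sym: "mtr ?S = ?S" by (simp add: mtr_mmul)
  note right_inv = minv_inverse(1)[OF full_col_rank_gram[OF full_rank]]
  have "mtr ?M i j = mmul k (mtr ?M) (mmul k ?S ?M) i j"
    using mmul_identity_right[OF right_inv assms(2)] by simp
  also have "\<dots> = mmul k (mtr (mmul k ?S ?M)) ?M i j"
    by (simp add: mmul_assoc[symmetric] mtr_mmul S_sym)
  also have "\<dots> = ?M i j"
    by (rule mmul_identity_left) (use right_inv assms in \<open>auto simp: is_identity_def mtr_def\<close>)
  finally show ?thesis by (simp add: mtr_def)
qed

lemma hat_mat_sym: "mtr (hat_mat n k A) = hat_mat n k A"
proof (intro ext)
  fix i j
  have "mtr (hat_mat n k A) i j = mmul k (mmul k A (mtr (minv k (mmul n (mtr A) A)))) (mtr A) i j"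
    by (simp add: hat_mat_def pinv_def mtr_mmul mmul_assoc)
  also have "\<dots> = hat_mat n k A i j"
    unfolding hat_mat_def pinv_def mmul_assoc[symmetric]
    by (rule mmul_cong) (auto simp: mmul_def mtr_def intro!: sum.cong dest: minv_gram_sym)
  finally show "mtr (hat_mat n k A) i j = hat_mat n k A i j" .
qed

lemma hat_mat_fixes_cols:
  assumes "j < k"
  shows "mmul n (hat_mat n k A) A i j = A i j"
  using mmul_identity_right[OF pinv_left_inverse assms]
  by (simp add: hat_mat_def mmul_assoc)

lemma hat_mat_idem: "mmul n (hat_mat n k A) (hat_mat n k A) = hat_mat n k A"
proof (intro ext)
  fix i j
  have "mmul n (hat_mat n k A) (hat_mat n k A) i j = mmul k A (mmul k (mmul n (pinv n k A) A) (pinv n k A)) i j"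
    by (simp add: hat_mat_def mmul_assoc)
  also have "\<dots> = hat_mat n k A i j"
    unfolding hat_mat_def
    by (rule mmul_cong) (auto intro: mmul_identity_left[OF pinv_left_inverse])
  finally show "mmul n (hat_mat n k A) (hat_mat n k A) i j = hat_mat n k A i j" .
qed

lemma orth_proj_hat_mat: "orth_proj n (hat_mat n k A)"
  by (simp add: orth_proj_def hat_mat_sym hat_mat_idem)

lemma trace_hat_mat: "(\<Sum>i<n. hat_mat n k A i i) = real k"
proof -
  have "(\<Sum>i<n. hat_mat n k A i i) = (\<Sum>l<k. mmul n (pinv n k A) A l l)"
    unfolding hat_mat_def mmul_def by (subst sum.swap) (simp add: mult.commute)
  also have "\<dots> = (\<Sum>l<k. 1)"
    using pinv_left_inverse by (simp add: is_identity_def)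
  finally show ?thesis by simp
qed

lemma hat_mat_absorbs_hat_mat_mmul:
  "mmul n (hat_mat n k A) (hat_mat n g (mmul k A C)) = hat_mat n g (mmul k A C)"
proof -
  have "mmul k (mmul n (hat_mat n k A) A) C = mmul k A C"
    by (intro ext mmul_cong) (auto simp: hat_mat_fixes_cols)
  then show ?thesis
    by (simp add: hat_mat_def mmul_assoc[symmetric])
qed

end

lemma orth_proj_sym:
  assumes "orth_proj n R"
  shows "R j i = R i j"
  using assms unfolding orth_proj_def mtr_def by metis

lemma sum_sq_mvec_orth_proj:
  assumes "orth_proj n R"
  shows "(\<Sum>i<n. (mvec n R v i)\<^sup>2) = qform n R v"
  using assms by (simp add: sum_sq_mvec_eq_qform_gram orth_proj_def)

lemma psd_orth_proj:
  assumes "orth_proj n R"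
  shows "psd n R"
  unfolding psd_def
  by (metis assms sum_sq_mvec_orth_proj sum_nonneg zero_le_power2)

lemma sum_sq_residual_orth_proj:
  assumes "orth_proj n R"
  shows "(\<Sum>i<n. (mvec n R v i - v i)\<^sup>2) = (\<Sum>i<n. (v i)\<^sup>2) - qform n R v"
proof -
  have cross: "(\<Sum>i<n. mvec n R v i * v i) = qform n R v"
    by (simp add: mvec_def qform_def sum_distrib_left sum_distrib_right mult_ac)
  have "(\<Sum>i<n. (mvec n R v i - v i)\<^sup>2)
      = (\<Sum>i<n. (mvec n R v i)\<^sup>2) - 2 * (\<Sum>i<n. mvec n R v i * v i) + (\<Sum>i<n. (v i)\<^sup>2)"
    by (simp add: power2_diff sum.distrib sum_subtractf sum_distrib_left mult_ac)
  then show ?thesis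
    using cross sum_sq_mvec_orth_proj[OF assms] by simp
qed

lemma sum_sq_entries_orth_proj:
  assumes "orth_proj n R"
  shows "(\<Sum>i<n. \<Sum>k<n. (R i k)\<^sup>2) = (\<Sum>i<n. R i i)"
proof -
  have "(\<Sum>i<n. \<Sum>k<n. (R i k)\<^sup>2) = (\<Sum>i<n. mmul n R R i i)"
    by (simp add: mmul_def power2_eq_square orth_proj_sym[OF assms, of _ i for i])
  then show ?thesis
    using assms by (simp add: orth_proj_def)
qed

lemma orth_proj_diff:
  assumes P: "orth_proj n P" and Q: "orth_proj n Q" and PQ: "mmul n P Q = Q"
  shows "orth_proj n (\<lambda>i j. P i j - Q i j)"
proof -
  have QP: "mmul n Q P = Q"
    by (metis PQ P Q mtr_mmul orth_proj_def)
  have "mmul n (\<lambda>i j. P i j - Q i j) (\<lambda>i j. P i j - Q i j)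
      = (\<lambda>i j. mmul n P P i j - mmul n P Q i j - mmul n Q P i j + mmul n Q Q i j)"
    by (simp add: mmul_def algebra_simps sum_subtractf sum.distrib)
  moreover have "mtr (\<lambda>i j. P i j - Q i j) = (\<lambda>i j. P i j - Q i j)"
    unfolding mtr_def by (intro ext) (metis orth_proj_sym P Q)
  ultimately show ?thesis
    using P Q PQ QP by (simp add: orth_proj_def)
qed

lemma qform_diff:
  "qform n (\<lambda>i j. P i j - Q i j) v = qform n P v - qform n Q v"
  by (simp add: qform_def algebra_simps sum_subtractf)

section \<open>Blocks of a tie matrix\<close>

lemma blk_0: "blk gam 0 = 0"
proof -
  have "{k. 0 < k \<and> k \<le> (0::nat) \<and> gam (k - 1) \<noteq> gam k} = {}" by auto
  then show ?thesis unfolding blk_def by simp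
qed

lemma blk_Suc_le: "blk gam (Suc j) \<le> Suc (blk gam j)"
proof -
  let ?C = "\<lambda>j. {k. 0 < k \<and> k \<le> j \<and> gam (k - 1) \<noteq> gam k}"
  have "?C (Suc j) \<subseteq> insert (Suc j) (?C j)" by auto
  then have "card (?C (Suc j)) \<le> card (insert (Suc j) (?C j))"
    by (intro card_mono) auto
  also have "\<dots> \<le> Suc (card (?C j))" by (simp add: card_insert_if)
  finally show ?thesis unfolding blk_def .
qed

lemma blk_last: "0 < J \<Longrightarrow> blk gam (J - 1) = nblocks J gam - 1"
proof -
  assume "0 < J"
  then have "{k. 0 < k \<and> k \<le> J - 1 \<and> gam (k - 1) \<noteq> gam k} = {k. 0 < k \<and> k < J \<and> gam (k - 1) \<noteq> gam k}"
    by auto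
  then show ?thesis unfolding blk_def nblocks_def by simp
qed

lemma blk_lt_nblocks:
  assumes "j < J"
  shows "blk gam j < nblocks J gam"
proof -
  have "{k. 0 < k \<and> k \<le> j \<and> gam (k - 1) \<noteq> gam k} \<subseteq> {k. 0 < k \<and> k < J \<and> gam (k - 1) \<noteq> gam k}"
    using assms by auto
  then show ?thesis unfolding blk_def nblocks_def
    by (simp add: card_mono less_Suc_eq_le)
qed

lemma blk_attains: "r \<le> blk gam j \<Longrightarrow> \<exists>i\<le>j. blk gam i = r"
proof (induction j arbitrary: r)
  case 0
  then show ?case by (simp add: blk_0)
next
  case (Suc j)
  show ?case
  proof (cases "r \<le> blk gam j")
    case True
    then show ?thesis using Suc.IH le_SucI by blast
  next
    case False
    then have "r = blk gam (Suc j)" using Suc.prems blk_Suc_le[of gam j] by simp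
    then show ?thesis by blast
  qed
qed

lemma blk_surj:
  assumes "r < nblocks J gam" and "0 < J"
  shows "\<exists>j<J. blk gam j = r"
proof -
  have "r \<le> blk gam (J - 1)" using assms blk_last[OF assms(2), of gam] by simp
  then obtain j where "j \<le> J - 1" "blk gam j = r" using blk_attains by blast
  then show ?thesis using assms(2) by (intro exI[of _ j]) auto
qed

lemma full_col_rank_tie_mat_tr:
  assumes "0 < J"
  shows "full_col_rank J (nblocks J gam) (mtr (tie_mat gam))"
  unfolding full_col_rank_def
proof (rule allI, rule impI)
  fix c
  assume tied: "\<forall>j<J. (\<Sum>r<nblocks J gam. mtr (tie_mat gam) j r * c r) = 0"
  have "(\<Sum>r<nblocks J gam. mtr (tie_mat gam) j r * c r) = c (blk gam j)" if "j < J" for j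
  proof -
    have "(\<Sum>r<nblocks J gam. mtr (tie_mat gam) j r * c r)
        = (\<Sum>r<nblocks J gam. if r = blk gam j then c r else 0)"
      by (intro sum.cong) (auto simp: mtr_def tie_mat_def)
    then show ?thesis
      using blk_lt_nblocks[OF that, of gam] by (simp add: sum.delta')
  qed
  then show "\<forall>r<nblocks J gam. c r = 0"
    using tied blk_surj[OF _ assms] by metis
qed

section \<open>Risk of a projection under Gaussian noise\<close>

context
  fixes \<sigma> :: real
  assumes \<sigma>_pos: "0 < \<sigma>"
begin

abbreviation gauss :: "real measure" where
  "gauss \<equiv> density lborel (normal_density 0 \<sigma>)"

abbreviation gauss_vec :: "nat \<Rightarrow> (nat \<Rightarrow> real) measure" where
  "gauss_vec n \<equiv> PiM {..<n} (\<lambda>_. gauss)"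

lemma integrable_gauss_power: "integrable gauss (\<lambda>t. t ^ m)"
  using integrable_normal_moment[OF \<sigma>_pos, of 0 m]
  by (subst integrable_density) auto

lemma gauss_moments:
  shows "(\<integral>t. t ^ 0 \<partial>gauss) = 1" and "(\<integral>t. t ^ 1 \<partial>gauss) = 0" and "(\<integral>t. t ^ 2 \<partial>gauss) = \<sigma>\<^sup>2"
proof -
  have density: "(\<integral>t. t ^ m \<partial>gauss) = (\<integral>t. normal_density 0 \<sigma> t * t ^ m \<partial>lborel)" for m
    by (subst integral_density) auto
  show "(\<integral>t. t ^ 0 \<partial>gauss) = 1"
    using density[of 0] integral_normal_density[OF \<sigma>_pos, of 0] by simp
  show "(\<integral>t. t ^ 1 \<partial>gauss) = 0"
    using density[of 1] integral_normal_moment_nz_1[OF \<sigma>_pos, of 0] by simp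
  show "(\<integral>t. t ^ 2 \<partial>gauss) = \<sigma>\<^sup>2"
    using density[of 2] integral_normal_moment_even[OF \<sigma>_pos, of 0 1] by simp
qed

lemma product_prob_space_gauss: "product_prob_space (\<lambda>_. gauss)"
  unfolding product_prob_space_def product_prob_space_axioms_def product_sigma_finite_def
  using prob_space_normal_density[OF \<sigma>_pos] prob_space_imp_sigma_finite by blast

lemma prob_space_gauss_vec: "prob_space (gauss_vec n)"
proof -
  interpret product_prob_space "\<lambda>_. gauss" "{..<n}" by (rule product_prob_space_gauss)
  show ?thesis by (rule P.prob_space_axioms)
qed

lemma gauss_vec_prod_power:
  shows "integrable (gauss_vec n) (\<lambda>x. \<Prod>i<n. x i ^ e i)"
    and "(\<integral>x. (\<Prod>i<n. x i ^ e i) \<partial>gauss_vec n) = (\<Prod>i<n. \<integral>t. t ^ e i \<partial>gauss)"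
proof -
  interpret product_prob_space "\<lambda>_. gauss" "{..<n}" by (rule product_prob_space_gauss)
  show "integrable (gauss_vec n) (\<lambda>x. \<Prod>i<n. x i ^ e i)"
    by (rule product_integrable_prod) (auto simp: integrable_gauss_power)
  show "(\<integral>x. (\<Prod>i<n. x i ^ e i) \<partial>gauss_vec n) = (\<Prod>i<n. \<integral>t. t ^ e i \<partial>gauss)"
    by (rule product_integral_prod) (auto simp: integrable_gauss_power)
qed

lemma gauss_vec_coord_power:
  assumes "a < n"
  shows "integrable (gauss_vec n) (\<lambda>x. x a ^ m)"
    and "(\<integral>x. x a ^ m \<partial>gauss_vec n) = (\<integral>t. t ^ m \<partial>gauss)"
proof -
  let ?e = "\<lambda>i. if i = a then m else 0"
  have "(\<Prod>i<n. x i ^ ?e i) = (\<Prod>i<n. if i = a then x a ^ m else 1)" for x :: "nat \<Rightarrow> real"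
    by (rule prod.cong) auto
  moreover have "(\<Prod>i<n. \<integral>t. t ^ ?e i \<partial>gauss) = (\<Prod>i<n. if i = a then \<integral>t. t ^ m \<partial>gauss else 1)"
    by (rule prod.cong) (auto simp: gauss_moments(1)[simplified])
  ultimately show "integrable (gauss_vec n) (\<lambda>x. x a ^ m)"
    and "(\<integral>x. x a ^ m \<partial>gauss_vec n) = (\<integral>t. t ^ m \<partial>gauss)"
    using gauss_vec_prod_power[of n ?e] assms by (simp_all add: prod.delta)
qed

lemma gauss_vec_mean:
  assumes "a < n"
  shows "integrable (gauss_vec n) (\<lambda>x. x a)" and "(\<integral>x. x a \<partial>gauss_vec n) = 0"
  using gauss_vec_coord_power[OF assms, of 1] gauss_moments(2) by simp_all

lemma gauss_vec_cov:
  assumes "a < n" and "b < n"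
  shows "integrable (gauss_vec n) (\<lambda>x. x a * x b)"
    and "(\<integral>x. x a * x b \<partial>gauss_vec n) = (if a = b then \<sigma>\<^sup>2 else 0)"
proof -
  have "integrable (gauss_vec n) (\<lambda>x. x a * x b) \<and>
      (\<integral>x. x a * x b \<partial>gauss_vec n) = (if a = b then \<sigma>\<^sup>2 else 0)"
  proof (cases "a = b")
    case True
    then show ?thesis
      using gauss_vec_coord_power[OF assms(1), of 2] gauss_moments(3) by (simp add: power2_eq_square)
  next
    case False
    let ?e = "\<lambda>i. if i = a \<or> i = b then 1 else (0::nat)"
    have "(\<Prod>i<n. x i ^ ?e i) = x a * x b" for x :: "nat \<Rightarrow> real"
    proof -
      have "(\<Prod>i<n. x i ^ ?e i) = (\<Prod>i<n. (if i = a then x a else 1) * (if i = b then x b else 1))"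
        by (rule prod.cong) (use False in auto)
      then show ?thesis using assms by (simp add: prod.distrib prod.delta)
    qed
    moreover have "(\<Prod>i<n. \<integral>t. t ^ ?e i \<partial>gauss) = 0"
      using assms gauss_moments(2) by (intro prod_zero) auto
    ultimately show ?thesis
      using gauss_vec_prod_power[of n ?e] False by simp
  qed
  then show "integrable (gauss_vec n) (\<lambda>x. x a * x b)"
    and "(\<integral>x. x a * x b \<partial>gauss_vec n) = (if a = b then \<sigma>\<^sup>2 else 0)"
    by simp_all
qed

lemma gauss_vec_linear_form:
  shows "integrable (gauss_vec n) (\<lambda>x. \<Sum>k<n. b k * x k)"
    and "(\<integral>x. (\<Sum>k<n. b k * x k) \<partial>gauss_vec n) = 0"
  using gauss_vec_mean by (auto simp: Bochner_Integration.integral_sum)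

lemma gauss_vec_quadratic_form:
  shows "integrable (gauss_vec n) (\<lambda>x. \<Sum>k<n. \<Sum>l<n. a k l * (x k * x l))"
    and "(\<integral>x. (\<Sum>k<n. \<Sum>l<n. a k l * (x k * x l)) \<partial>gauss_vec n) = \<sigma>\<^sup>2 * (\<Sum>k<n. a k k)"
proof -
  show "integrable (gauss_vec n) (\<lambda>x. \<Sum>k<n. \<Sum>l<n. a k l * (x k * x l))"
    by (auto intro!: Bochner_Integration.integrable_sum integrable_mult_right gauss_vec_cov(1))
  have "(\<integral>x. (\<Sum>k<n. \<Sum>l<n. a k l * (x k * x l)) \<partial>gauss_vec n)
      = (\<Sum>k<n. \<Sum>l<n. a k l * (if k = l then \<sigma>\<^sup>2 else 0))"
  proof -
    have "(\<integral>x. (\<Sum>l<n. a k l * (x k * x l)) \<partial>gauss_vec n)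
        = (\<Sum>l<n. a k l * (if k = l then \<sigma>\<^sup>2 else 0))" if "k < n" for k
      using that gauss_vec_cov by (subst Bochner_Integration.integral_sum) auto
    then show ?thesis
      using gauss_vec_cov(1)
      by (subst Bochner_Integration.integral_sum) (auto intro!: sum.cong Bochner_Integration.integrable_sum)
  qed
  also have "\<dots> = \<sigma>\<^sup>2 * (\<Sum>k<n. a k k)"
    by (simp add: sum_distrib_left mult.commute if_distrib sum.delta cong: if_cong)
  finally show "(\<integral>x. (\<Sum>k<n. \<Sum>l<n. a k l * (x k * x l)) \<partial>gauss_vec n) = \<sigma>\<^sup>2 * (\<Sum>k<n. a k k)" .
qed

lemma gauss_vec_sq_affine:
  shows "integrable (gauss_vec n) (\<lambda>x. ((\<Sum>k<n. r k * x k) + c)\<^sup>2)"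
    and "(\<integral>x. ((\<Sum>k<n. r k * x k) + c)\<^sup>2 \<partial>gauss_vec n) = \<sigma>\<^sup>2 * (\<Sum>k<n. (r k)\<^sup>2) + c\<^sup>2"
proof -
  interpret prob_space "gauss_vec n" by (rule prob_space_gauss_vec)
  have expand: "((\<Sum>k<n. r k * x k) + c)\<^sup>2
      = (\<Sum>k<n. \<Sum>l<n. (r k * r l) * (x k * x l)) + (\<Sum>k<n. (2 * c * r k) * x k) + c\<^sup>2" for x
  proof -
    have "(\<Sum>k<n. r k * x k)\<^sup>2 = (\<Sum>k<n. \<Sum>l<n. (r k * r l) * (x k * x l))"
      by (simp add: power2_eq_square sum_product mult_ac)
    moreover have "2 * (\<Sum>k<n. r k * x k) * c = (\<Sum>k<n. (2 * c * r k) * x k)"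
      by (simp add: sum_distrib_left sum_distrib_right mult_ac)
    ultimately show ?thesis by (simp add: power2_sum)
  qed
  note quadratic = gauss_vec_quadratic_form[of n "\<lambda>k l. r k * r l"]
  note linear = gauss_vec_linear_form[of n "\<lambda>k. 2 * c * r k"]
  show "integrable (gauss_vec n) (\<lambda>x. ((\<Sum>k<n. r k * x k) + c)\<^sup>2)"
    unfolding expand using quadratic(1) linear(1) by simp
  show "(\<integral>x. ((\<Sum>k<n. r k * x k) + c)\<^sup>2 \<partial>gauss_vec n) = \<sigma>\<^sup>2 * (\<Sum>k<n. (r k)\<^sup>2) + c\<^sup>2"
    unfolding expand using quadratic linear
    by (simp add: Bochner_Integration.integral_add power2_eq_square prob_space)
qed

lemma gauss_vec_mse_orth_proj:
  assumes "orth_proj n R"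
  shows "(\<integral>\<epsilon>. (\<Sum>i<n. (mvec n R (\<lambda>i. f i + \<epsilon> i) i - f i)\<^sup>2) \<partial>gauss_vec n)
    = (\<Sum>i<n. (f i)\<^sup>2) - qform n R f + \<sigma>\<^sup>2 * (\<Sum>i<n. R i i)"
proof -
  have noise_plus_bias: "mvec n R (\<lambda>i. f i + \<epsilon> i) i - f i = (\<Sum>k<n. R i k * \<epsilon> k) + (mvec n R f i - f i)"
    for \<epsilon> i
    by (simp add: mvec_def distrib_left sum.distrib)
  have "(\<integral>\<epsilon>. (\<Sum>i<n. (mvec n R (\<lambda>i. f i + \<epsilon> i) i - f i)\<^sup>2) \<partial>gauss_vec n)
      = (\<Sum>i<n. \<sigma>\<^sup>2 * (\<Sum>k<n. (R i k)\<^sup>2) + (mvec n R f i - f i)\<^sup>2)"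
    unfolding noise_plus_bias
    by (subst Bochner_Integration.integral_sum) (auto simp: gauss_vec_sq_affine)
  also have "\<dots> = \<sigma>\<^sup>2 * (\<Sum>i<n. \<Sum>k<n. (R i k)\<^sup>2) + (\<Sum>i<n. (mvec n R f i - f i)\<^sup>2)"
    by (simp add: sum.distrib sum_distrib_left)
  also have "\<dots> = (\<Sum>i<n. (f i)\<^sup>2) - qform n R f + \<sigma>\<^sup>2 * (\<Sum>i<n. R i i)"
    using sum_sq_residual_orth_proj[OF assms] sum_sq_entries_orth_proj[OF assms] by simp
  finally show ?thesis .
qed

lemma gauss_vec_mse_orth_proj_le:
  assumes H: "orth_proj n H" and Hg: "orth_proj n Hg"
    and "qform n (\<lambda>i j. H i j - Hg i j) f \<le> \<sigma>\<^sup>2 * ((\<Sum>i<n. H i i) - (\<Sum>i<n. Hg i i))"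
  shows "(\<integral>\<epsilon>. (\<Sum>i<n. (mvec n Hg (\<lambda>i. f i + \<epsilon> i) i - f i)\<^sup>2) \<partial>gauss_vec n)
    \<le> (\<integral>\<epsilon>. (\<Sum>i<n. (mvec n H (\<lambda>i. f i + \<epsilon> i) i - f i)\<^sup>2) \<partial>gauss_vec n)"
  using assms(3)
  unfolding gauss_vec_mse_orth_proj[OF H] gauss_vec_mse_orth_proj[OF Hg] qform_diff
  by (simp add: algebra_simps)

end

theorem theorem4:
  fixes n K :: nat and xi x :: "nat \<Rightarrow> real" and f :: "real \<Rightarrow> real" and \<sigma> :: real
    and yobs gamh :: "nat \<Rightarrow> real"
  assumes knots: "\<forall>i\<le>K. xi i < xi (Suc i)"
    and sigma_pos: "\<sigma> > 0"
    and rank: "full_col_rank n (K + 4) (\<lambda>i j. cubic_bspline xi K j (x i))"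
    and mono: "\<forall>j. Suc j < K + 4 \<longrightarrow> gamh j \<le> gamh (Suc j)"
    and minimizer: "\<forall>gam. (\<forall>j. Suc j < K + 4 \<longrightarrow> gam j \<le> gam (Suc j)) \<longrightarrow>
         (\<Sum>i<n. (yobs i - (\<Sum>j<K + 4. cubic_bspline xi K j (x i) * gamh j))\<^sup>2)
           \<le> (\<Sum>i<n. (yobs i - (\<Sum>j<K + 4. cubic_bspline xi K j (x i) * gam j))\<^sup>2)"
    and g_lt: "nblocks (K + 4) gamh < K + 4"
  shows
    "let J = K + 4; g = nblocks J gamh;
         B = (\<lambda>i j. cubic_bspline xi K j (x i));
         G = tie_mat gamh;
         fv = (\<lambda>i. f (x i));
         H = mmul J (mmul J B (minv J (mmul n (mtr B) B))) (mtr B);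
         Hg = mmul g (mmul g (mmul J B (mtr G))
                          (minv g (mmul J (mmul n (mmul J G (mtr B)) B) (mtr G))))
                     (mmul J G (mtr B));
         D = (\<lambda>i j. H i j - Hg i j);
         M = PiM {..<n} (\<lambda>_. density lborel (normal_density 0 \<sigma>));
         y = (\<lambda>\<epsilon> i. fv i + \<epsilon> i);
         gls = (\<lambda>\<epsilon>. mvec n (mmul J (minv J (mmul n (mtr B) B)) (mtr B)) (y \<epsilon>));
         MSE = (\<integral>\<epsilon>. (\<Sum>i<n. (mvec n Hg (y \<epsilon>) i - fv i)\<^sup>2) \<partial>M);
         MSE_ls = (\<integral>\<epsilon>. (\<Sum>i<n. (mvec J B (gls \<epsilon>) i - fv i)\<^sup>2) \<partial>M)
     in psd n D \<and>
        (\<sigma>\<^sup>2 \<ge> qform n D fv / (real J - real g) \<longrightarrow> MSE \<le> MSE_ls)"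
proof -
  let ?J = "K + 4" and ?B = "\<lambda>i j. cubic_bspline xi K j (x i)" and ?G = "tie_mat gamh"
  let ?g = "nblocks ?J gamh" and ?f = "\<lambda>i. f (x i)"
  define H where "H = hat_mat n ?J ?B"
  define Hg where "Hg = hat_mat n ?g (mmul ?J ?B (mtr ?G))"
  have BG_rank: "full_col_rank n ?g (mmul ?J ?B (mtr ?G))"
    using full_col_rank_mmul[OF rank full_col_rank_tie_mat_tr] by simp
  have H: "orth_proj n H" "(\<Sum>i<n. H i i) = real ?J"
    unfolding H_def using orth_proj_hat_mat[OF rank] trace_hat_mat[OF rank] by auto
  have Hg: "orth_proj n Hg" "(\<Sum>i<n. Hg i i) = real ?g"
    unfolding Hg_def using orth_proj_hat_mat[OF BG_rank] trace_hat_mat[OF BG_rank] by auto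
  have D: "orth_proj n (\<lambda>i j. H i j - Hg i j)"
    using orth_proj_diff[OF H(1) Hg(1)] hat_mat_absorbs_hat_mat_mmul[OF rank]
    by (simp add: H_def Hg_def)
  have mse_le: "(\<integral>\<epsilon>. (\<Sum>i<n. (mvec n Hg (\<lambda>i. ?f i + \<epsilon> i) i - ?f i)\<^sup>2) \<partial>gauss_vec \<sigma> n)
      \<le> (\<integral>\<epsilon>. (\<Sum>i<n. (mvec n H (\<lambda>i. ?f i + \<epsilon> i) i - ?f i)\<^sup>2) \<partial>gauss_vec \<sigma> n)"
    if "\<sigma>\<^sup>2 \<ge> qform n (\<lambda>i j. H i j - Hg i j) ?f / (real ?J - real ?g)"
  proof (rule gauss_vec_mse_orth_proj_le[OF sigma_pos H(1) Hg(1)])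
    show "qform n (\<lambda>i j. H i j - Hg i j) ?f \<le> \<sigma>\<^sup>2 * ((\<Sum>i<n. H i i) - (\<Sum>i<n. Hg i i))"
      using that g_lt by (simp add: H(2) Hg(2) pos_divide_le_eq)
  qed
  have H_eq: "mmul ?J (mmul ?J ?B (minv ?J (mmul n (mtr ?B) ?B))) (mtr ?B) = H"
    by (simp add: H_def hat_mat_def pinv_def mmul_assoc)
  have Hg_eq: "mmul ?g (mmul ?g (mmul ?J ?B (mtr ?G))
      (minv ?g (mmul ?J (mmul n (mmul ?J ?G (mtr ?B)) ?B) (mtr ?G)))) (mmul ?J ?G (mtr ?B)) = Hg"
    by (simp add: Hg_def hat_mat_def pinv_def mtr_mmul mmul_assoc)
  have ls_eq: "mvec ?J ?B (mvec n (mmul ?J (minv ?J (mmul n (mtr ?B) ?B)) (mtr ?B)) v) = mvec n H v" for v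
    by (simp add: H_def hat_mat_def pinv_def mvec_mmul)
  show ?thesis
    unfolding Let_def H_eq Hg_eq ls_eq using psd_orth_proj[OF D] mse_le by blast
qed

end
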